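(* Let $G$ be a finite undirected graph and $\tau\ge1$ an integer. Run the following procedure. Maintain a current graph $H$, initially $H=G$, and a stored value $s(e)$ for each edge, initially $s(e)=\mathrm{sup}_\tau(e,G)$ for every $e\in E(G)$. While $H$ has at least one edge: set $k:=\min_{e\in E(H)} s(e)+2$; then, while there exists an edge $e=(u,v)\in E(H)$ with $s(e)\le k-2$, pick any such edge, assign $\phi(e):=k$, let $H_{\mathrm{old}}:=H$, delete the edge $e$ from $H$, and for every edge $e'=(u',v')\in E(H)$ with $u',v'\in\{u\}\cup\{v\}\cup\Delta_\tau(e,H_{\mathrm{old}})$ and $s(e')>k-2$, reset $s(e'):=\mathrm{sup}_\tau(e',H)$. Then, when the procedure terminates, every edge $e\in E(G)$ has been assigned exactly once and $\phi(e)=\phi_\tau(e,G)$, regardless of the choices made.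
   Context: Graphs are finite, simple, undirected and unweighted; paths may repeat vertices and their length is the number of edges. For vertices $v,u$ of a graph $H$, $u$ is $\tau$-hop reachable from $v$ in $H$ if there is a path between them in $H$ of length at most $\tau$. $N_\tau(v,H)$ is the set of vertices $u\ne v$ that are $\tau$-hop reachable from $v$ in $H$. For an edge $e=(u,v)$ of $H$, $\Delta_\tau(e,H)=N_\tau(u,H)\cap N_\tau(v,H)$ and $\mathrm{sup}_\tau(e,H)=|\Delta_\tau(e,H)|$. The $(k,\tau)$-truss of $G$ is the maximal subgraph $G'$ of $G$ such that $\mathrm{sup}_\tau(e,G')\ge k-2$ for every edge $e\in E(G')$ (supports computed inside $G'$) and no more edges of $G$ can be added while keeping this property; a subgraph is determined by its edge set. The higher-order truss number $\phi_\tau(e,G)$ of an edge $e$ is the maximum $k$ such that $e$ belongs to the $(k,\tau)$-truss of $G$. *)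

theory Defs
  imports Main
begin

text \<open>A graph is given by its edge set: a set of 2-element vertex sets.
  A walk in H is a nonempty vertex list whose consecutive entries are adjacent in H;
  its length is (number of vertices - 1).\<close>

definition walk :: "'a set set \<Rightarrow> 'a list \<Rightarrow> bool" where
  "walk H xs \<longleftrightarrow> xs \<noteq> [] \<and> (\<forall>i. Suc i < length xs \<longrightarrow> {xs ! i, xs ! Suc i} \<in> H)"

definition hop_reach :: "nat \<Rightarrow> 'a set set \<Rightarrow> 'a \<Rightarrow> 'a \<Rightarrow> bool" where
  "hop_reach \<tau> H v u \<longleftrightarrow>
     (\<exists>xs. walk H xs \<and> hd xs = v \<and> last xs = u \<and> length xs - 1 \<le> \<tau>)"

definition Nbh :: "nat \<Rightarrow> 'a \<Rightarrow> 'a set set \<Rightarrow> 'a set" where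
  "Nbh \<tau> v H = {u. u \<noteq> v \<and> hop_reach \<tau> H v u}"

definition Delta :: "nat \<Rightarrow> 'a set \<Rightarrow> 'a set set \<Rightarrow> 'a set" where
  "Delta \<tau> e H = (\<Inter>x\<in>e. Nbh \<tau> x H)"

definition supp :: "nat \<Rightarrow> 'a set \<Rightarrow> 'a set set \<Rightarrow> nat" where
  "supp \<tau> e H = card (Delta \<tau> e H)"

definition truss_ok :: "nat \<Rightarrow> nat \<Rightarrow> 'a set set \<Rightarrow> bool" where
  "truss_ok \<tau> k F \<longleftrightarrow> (\<forall>e\<in>F. int (supp \<tau> e F) \<ge> int k - 2)"

definition is_truss :: "nat \<Rightarrow> nat \<Rightarrow> 'a set set \<Rightarrow> 'a set set \<Rightarrow> bool" where
  "is_truss \<tau> k G F \<longleftrightarrow> F \<subseteq> G \<and> truss_ok \<tau> k F \<and>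
     (\<forall>F'. F \<subseteq> F' \<and> F' \<subseteq> G \<and> truss_ok \<tau> k F' \<longrightarrow> F' = F)"

definition truss :: "nat \<Rightarrow> nat \<Rightarrow> 'a set set \<Rightarrow> 'a set set" where
  "truss \<tau> k G = (THE F. is_truss \<tau> k G F)"

definition truss_number :: "nat \<Rightarrow> 'a set \<Rightarrow> 'a set set \<Rightarrow> nat" where
  "truss_number \<tau> e G = (GREATEST k. e \<in> truss \<tau> k G)"

text \<open>Procedure states: (H, s, log, k, inner). log records the assignments phi(e) := k
  in order; inner says whether we are inside the inner while loop.\<close>
type_synonym 'a pstate = "'a set set \<times> ('a set \<Rightarrow> nat) \<times> ('a set \<times> nat) list \<times> nat \<times> bool"

definition init_state :: "nat \<Rightarrow> 'a set set \<Rightarrow> 'a pstate" where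
  "init_state \<tau> G = (G, \<lambda>e. supp \<tau> e G, [], 0, False)"

inductive proc_step :: "nat \<Rightarrow> 'a pstate \<Rightarrow> 'a pstate \<Rightarrow> bool" for \<tau> where
  outer: "H \<noteq> {} \<Longrightarrow>
     proc_step \<tau> (H, s, log, k0, False) (H, s, log, Min (s ` H) + 2, True)"
| pick: "e \<in> H \<Longrightarrow> s e \<le> k - 2 \<Longrightarrow>
     proc_step \<tau> (H, s, log, k, True)
       (H - {e},
        (\<lambda>e'. if e' \<in> H - {e} \<and> e' \<subseteq> e \<union> Delta \<tau> e H \<and> s e' > k - 2
              then supp \<tau> e' (H - {e}) else s e'),
        log @ [(e, k)], k, True)"
| inner_done: "(\<forall>e\<in>H. s e > k - 2) \<Longrightarrow>
     proc_step \<tau> (H, s, log, k, True) (H, s, log, k, False)"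

definition final_state :: "'a pstate \<Rightarrow> bool" where
  "final_state st \<longleftrightarrow> (case st of (H, s, log, k, inner) \<Rightarrow> H = {} \<and> \<not> inner)"

end

theory Submission
  imports Defs
begin

text \<open>The procedure maintains an invariant: the current graph H contains the (k+1)-truss, the
  stored values bound the supports in H from above and are exact except on edges already found
  deletable in the current round, and inside a round H lies in the k-truss. An edge deleted in
  round k then has support at most k - 2 in a supergraph of the (k+1)-truss, so it lies in the
  k-truss but not in the (k+1)-truss, i.e. its truss number is k. Exactness survives a deletion
  because removing e can change the support of an edge e' only if both endpoints of e' lie
  within \<tau> hops of both endpoints of e (or in e), and these are exactly the edges recomputed.
  The truss itself is well defined since supports grow with the graph: the union of all
  subgraphs with the truss property again has it.\<close>

lemma walk_mono: "H \<subseteq> H' \<Longrightarrow> walk H xs \<Longrightarrow> walk H' xs"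
  unfolding walk_def by blast

lemma hop_reach_mono: "H \<subseteq> H' \<Longrightarrow> hop_reach \<tau> H v u \<Longrightarrow> hop_reach \<tau> H' v u"
  unfolding hop_reach_def using walk_mono by blast

lemma hop_reach_le: "hop_reach \<tau> H v u \<Longrightarrow> \<tau> \<le> \<tau>' \<Longrightarrow> hop_reach \<tau>' H v u"
  unfolding hop_reach_def by fastforce

lemma hop_reach_0_eq: "hop_reach 0 H v u \<Longrightarrow> u = v"
  unfolding hop_reach_def walk_def by (auto simp: length_Suc_conv le_Suc_eq)

lemma walk_rev: "walk H xs \<Longrightarrow> walk H (rev xs)"
  unfolding walk_def
proof (intro conjI allI impI)
  fix i assume w: "xs \<noteq> [] \<and> (\<forall>i. Suc i < length xs \<longrightarrow> {xs ! i, xs ! Suc i} \<in> H)"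
    and i: "Suc i < length (rev xs)"
  define j where "j = length xs - Suc (Suc i)"
  have j: "Suc j < length xs" "length xs - Suc i = Suc j" "length xs - Suc (Suc i) = j"
    using i unfolding j_def by auto
  have "{xs ! j, xs ! Suc j} \<in> H" using w j by blast
  then show "{rev xs ! i, rev xs ! Suc i} \<in> H"
    using i j by (simp add: rev_nth insert_commute)
qed simp

lemma hop_reach_sym: "hop_reach \<tau> H v u \<Longrightarrow> hop_reach \<tau> H u v"
  unfolding hop_reach_def
  by (metis walk_rev walk_def hd_rev last_rev length_rev)

lemma hop_reach_snoc:
  assumes "hop_reach \<tau> H v u" and "{u, w} \<in> H"
  shows "hop_reach (Suc \<tau>) H v w"
proof -
  obtain xs where xs: "walk H xs" "hd xs = v" "last xs = u" "length xs - 1 \<le> \<tau>"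
    using assms(1) unfolding hop_reach_def by blast
  then have "xs \<noteq> []" by (simp add: walk_def)
  have "walk H (xs @ [w])"
    unfolding walk_def
  proof (intro conjI allI impI)
    fix i assume i: "Suc i < length (xs @ [w])"
    show "{(xs @ [w]) ! i, (xs @ [w]) ! Suc i} \<in> H"
    proof (cases "Suc i < length xs")
      case True
      then show ?thesis using xs(1) by (simp add: nth_append walk_def)
    next
      case False
      then have "i = length xs - 1" using i by auto
      then show ?thesis using assms(2) xs(3) \<open>xs \<noteq> []\<close> by (simp add: nth_append last_conv_nth)
    qed
  qed simp
  then show ?thesis
    unfolding hop_reach_def using xs \<open>xs \<noteq> []\<close> by (intro exI[of _ "xs @ [w]"]) auto
qed

lemma hop_reach_take: "walk H xs \<Longrightarrow> i < length xs \<Longrightarrow> hop_reach i H (hd xs) (xs ! i)"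
  unfolding hop_reach_def walk_def
  by (rule exI[of _ "take (Suc i) xs"])
    (auto simp: last_conv_nth min_def intro!: arg_cong[where f = "(!) xs"])

lemma hop_reach_drop:
  "walk H xs \<Longrightarrow> i < length xs \<Longrightarrow> hop_reach (length xs - 1 - i) H (xs ! i) (last xs)"
  unfolding hop_reach_def walk_def
  by (rule exI[of _ "drop i xs"]) (auto simp: hd_drop_conv_nth)

lemma hop_reach_in_Union:
  assumes "hop_reach \<tau> H v u" and "u \<noteq> v"
  shows "u \<in> \<Union>H"
proof -
  obtain xs where xs: "walk H xs" "hd xs = v" "last xs = u"
    using assms(1) unfolding hop_reach_def by blast
  then have "2 \<le> length xs"
    using assms(2) by (cases xs) (auto simp: walk_def Suc_le_eq split: if_splits)
  then have "{xs ! (length xs - 2), xs ! Suc (length xs - 2)} \<in> H"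
    using xs(1) unfolding walk_def by simp
  moreover have "xs ! Suc (length xs - 2) = u"
    using xs(3) \<open>2 \<le> length xs\<close> by (cases xs rule: rev_cases) (auto simp: nth_append)
  ultimately show ?thesis by blast
qed

lemma hop_reach_remove_edge:
  assumes "hop_reach \<tau> H v u" and "\<not> hop_reach \<tau> (H - {e}) v u"
  obtains a b i j where "e = {a, b}" "hop_reach i H v a" "hop_reach j H b u" "i + j < \<tau>"
proof -
  obtain xs where xs: "walk H xs" "hd xs = v" "last xs = u" "length xs - 1 \<le> \<tau>"
    using assms(1) unfolding hop_reach_def by blast
  then have "\<not> walk (H - {e}) xs"
    using assms(2) unfolding hop_reach_def by blast
  then obtain i where i: "Suc i < length xs" "{xs ! i, xs ! Suc i} = e"
    using xs(1) unfolding walk_def by blast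
  show thesis
  proof (rule that)
    show "e = {xs ! i, xs ! Suc i}" using i(2) by simp
    show "hop_reach i H v (xs ! i)"
      using hop_reach_take[OF xs(1)] i(1) xs(2) by simp
    show "hop_reach (length xs - 1 - Suc i) H (xs ! Suc i) u"
      using hop_reach_drop[OF xs(1) i(1)] xs(3) by simp
    show "i + (length xs - 1 - Suc i) < \<tau>" using i(1) xs(4) by linarith
  qed
qed

definition finite_graph :: "'a set set \<Rightarrow> bool" where
  "finite_graph G \<longleftrightarrow> finite G \<and> (\<forall>e\<in>G. card e = 2)"

lemma finite_graph_finite_Union: "finite_graph G \<Longrightarrow> H \<subseteq> G \<Longrightarrow> finite (\<Union>H)"
  unfolding finite_graph_def
  by (metis card.infinite finite_Union finite_subset subsetD zero_neq_numeral)

lemma finite_graph_edge_nonempty: "finite_graph G \<Longrightarrow> e \<in> G \<Longrightarrow> e \<noteq> {}"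
  unfolding finite_graph_def by fastforce

lemma Delta_mono: "H \<subseteq> H' \<Longrightarrow> Delta \<tau> e H \<subseteq> Delta \<tau> e H'"
  unfolding Delta_def Nbh_def using hop_reach_mono[of H H' \<tau>] by blast

lemma Delta_subset_Union: "e \<noteq> {} \<Longrightarrow> Delta \<tau> e H \<subseteq> \<Union>H"
  unfolding Delta_def Nbh_def using hop_reach_in_Union[of \<tau> H] by blast

lemma supp_mono:
  assumes "finite (\<Union>H')" and "H \<subseteq> H'" and "e \<noteq> {}"
  shows "supp \<tau> e H \<le> supp \<tau> e H'"
proof -
  have "finite (Delta \<tau> e H')"
    using assms(1) Delta_subset_Union[OF assms(3)] by (rule finite_subset[rotated])
  then show ?thesis
    unfolding supp_def by (rule card_mono) (rule Delta_mono[OF assms(2)])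
qed

lemma mem_edge_union_DeltaI:
  assumes "hop_reach \<tau> H a z" and "hop_reach \<tau> H b z"
  shows "z \<in> {a, b} \<union> Delta \<tau> {a, b} H"
  using assms unfolding Delta_def Nbh_def by auto

lemma Delta_remove_edge:
  assumes "e \<in> H" and "e' \<in> H" and "card e' = 2" and "\<not> e' \<subseteq> e \<union> Delta \<tau> e H"
  shows "Delta \<tau> e' (H - {e}) = Delta \<tau> e' H"
proof (rule ccontr)
  assume "Delta \<tau> e' (H - {e}) \<noteq> Delta \<tau> e' H"
  then obtain w where w: "w \<in> Delta \<tau> e' H" "w \<notin> Delta \<tau> e' (H - {e})"
    using Delta_mono[of "H - {e}" H \<tau> e'] by blast
  then obtain y where y: "y \<in> e'" "hop_reach \<tau> H y w" "\<not> hop_reach \<tau> (H - {e}) y w"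
    unfolding Delta_def Nbh_def by blast
  obtain a b i j where ab: "e = {a, b}" and
    ya: "hop_reach i H y a" and bw: "hop_reach j H b w" and ij: "i + j < \<tau>"
    by (rule hop_reach_remove_edge[OF y(2,3)])
  obtain x where e': "e' = {y, x}"
    using \<open>card e' = 2\<close> y(1) by (auto simp: card_2_iff)
  have ab_H: "{a, b} \<in> H" and yx_H: "{y, x} \<in> H"
    using assms(1,2) ab e' by auto
  have ay: "hop_reach i H a y"
    using hop_reach_sym[OF ya] .
  have by': "hop_reach (Suc i) H b y"
    using hop_reach_sym[OF hop_reach_snoc[OF ya ab_H]] .
  have "y \<in> e \<union> Delta \<tau> e H"
    unfolding ab using ij
    by (intro mem_edge_union_DeltaI hop_reach_le[OF ay] hop_reach_le[OF by']) simp_all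
  moreover have "x \<in> e \<union> Delta \<tau> e H"
    unfolding ab
  proof (rule mem_edge_union_DeltaI)
    show "hop_reach \<tau> H a x"
      using hop_reach_le[OF hop_reach_snoc[OF ay yx_H]] ij by simp
    show "hop_reach \<tau> H b x"
    proof (cases j)
      case 0
      \<comment> \<open>the short walk from y to w ends with the removed edge, so w = b\<close>
      then have "w = b" using bw hop_reach_0_eq by fast
      moreover have "w \<in> Nbh \<tau> x H" using w(1) e' unfolding Delta_def by blast
      ultimately show ?thesis unfolding Nbh_def by (auto intro: hop_reach_sym)
    next
      case (Suc j')
      then show ?thesis
        using hop_reach_le[OF hop_reach_snoc[OF by' yx_H]] ij by simp
    qed
  qed
  ultimately show False using assms(4) e' by blast
qed

lemma truss_ok_Union:
  assumes "finite_graph G"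
  shows "truss_ok \<tau> k (\<Union>{F. F \<subseteq> G \<and> truss_ok \<tau> k F})" (is "truss_ok \<tau> k ?U")
  unfolding truss_ok_def[of \<tau> k ?U]
proof
  fix e assume "e \<in> ?U"
  then obtain F where F: "F \<subseteq> G" "truss_ok \<tau> k F" "e \<in> F" by blast
  have "supp \<tau> e F \<le> supp \<tau> e ?U"
    using F by (intro supp_mono finite_graph_finite_Union[OF assms]
        finite_graph_edge_nonempty[OF assms]) auto
  then show "int k - 2 \<le> int (supp \<tau> e ?U)"
    using F unfolding truss_ok_def by force
qed

lemma truss_eq_Union:
  assumes "finite_graph G"
  shows "truss \<tau> k G = \<Union>{F. F \<subseteq> G \<and> truss_ok \<tau> k F}" (is "_ = ?U")
proof -
  have U: "is_truss \<tau> k G ?U"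
    unfolding is_truss_def using truss_ok_Union[OF assms] by blast
  moreover have "F = ?U" if F: "is_truss \<tau> k G F" for F
  proof -
    have "F \<subseteq> ?U" using F unfolding is_truss_def by blast
    with U F show "F = ?U" unfolding is_truss_def by simp
  qed
  ultimately show ?thesis
    unfolding truss_def by (rule the_equality)
qed

lemma truss_subset: "finite_graph G \<Longrightarrow> truss \<tau> k G \<subseteq> G"
  by (auto simp: truss_eq_Union)

lemma truss_ok_truss: "finite_graph G \<Longrightarrow> truss_ok \<tau> k (truss \<tau> k G)"
  by (simp add: truss_eq_Union truss_ok_Union)

lemma subset_truss:
  "finite_graph G \<Longrightarrow> F \<subseteq> G \<Longrightarrow> truss_ok \<tau> k F \<Longrightarrow> F \<subseteq> truss \<tau> k G"
  by (auto simp: truss_eq_Union)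

lemma truss_antimono:
  assumes "finite_graph G" and "i \<le> j"
  shows "truss \<tau> j G \<subseteq> truss \<tau> i G"
proof -
  have "truss_ok \<tau> i (truss \<tau> j G)"
    using truss_ok_truss[OF assms(1), of \<tau> j] assms(2) unfolding truss_ok_def by force
  then show ?thesis by (rule subset_truss[OF assms(1) truss_subset[OF assms(1)]])
qed

lemma not_in_truss_if_supp_less:
  assumes "finite_graph G" and "H \<subseteq> G" and "truss \<tau> k G \<subseteq> H" and "supp \<tau> e H + 2 < k"
  shows "e \<notin> truss \<tau> k G"
proof
  assume e: "e \<in> truss \<tau> k G"
  then have "int k - 2 \<le> int (supp \<tau> e (truss \<tau> k G))"
    using truss_ok_truss[OF assms(1)] unfolding truss_ok_def by blast
  moreover have "supp \<tau> e (truss \<tau> k G) \<le> supp \<tau> e H"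
    using assms(2,3) e truss_subset[OF assms(1)]
    by (intro supp_mono finite_graph_finite_Union[OF assms(1)]
        finite_graph_edge_nonempty[OF assms(1)]) auto
  ultimately show False using assms(4) by linarith
qed

lemma truss_number_eqI:
  assumes "finite_graph G" and "e \<in> truss \<tau> k G" and "e \<notin> truss \<tau> (Suc k) G"
  shows "truss_number \<tau> e G = k"
  unfolding truss_number_def
proof (rule Greatest_equality)
  show "e \<in> truss \<tau> k G" by (fact assms(2))
  show "j \<le> k" if "e \<in> truss \<tau> j G" for j
    using that assms(3) truss_antimono[OF assms(1), of "Suc k" j \<tau>]
    by (meson not_less_eq_eq subsetD)
qed

fun proc_inv :: "nat \<Rightarrow> 'a set set \<Rightarrow> 'a pstate \<Rightarrow> bool" where
  "proc_inv \<tau> G (H, s, log, k, inner) \<longleftrightarrow>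
     H \<subseteq> G \<and> set (map fst log) = G - H \<and> distinct (map fst log) \<and>
     (\<forall>(e, j)\<in>set log. j = truss_number \<tau> e G) \<and>
     truss \<tau> (Suc k) G \<subseteq> H \<and>
     (\<forall>e\<in>H. supp \<tau> e H \<le> s e) \<and>
     (\<forall>e\<in>H. (inner \<longrightarrow> k - 2 < s e) \<longrightarrow> s e = supp \<tau> e H) \<and>
     (if inner then 2 \<le> k \<and> H \<subseteq> truss \<tau> k G else \<forall>e\<in>H. k < s e + 2)"

lemma proc_inv_init: "finite_graph G \<Longrightarrow> proc_inv \<tau> G (init_state \<tau> G)"
  by (simp add: init_state_def truss_subset)

lemma proc_inv_outer:
  assumes "finite_graph G" and "proc_inv \<tau> G (H, s, log, k0, False)" and "H \<noteq> {}"
  shows "proc_inv \<tau> G (H, s, log, Min (s ` H) + 2, True)"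
proof -
  define m where "m = Min (s ` H)"
  have HG: "H \<subseteq> G" and exact: "\<forall>e\<in>H. s e = supp \<tau> e H"
    and k0: "\<forall>e\<in>H. k0 < s e + 2" and T: "truss \<tau> (Suc k0) G \<subseteq> H"
    using assms(2) by auto
  have "finite H"
    using assms(1) HG unfolding finite_graph_def by (auto intro: finite_subset)
  then have m_le: "\<forall>e\<in>H. m \<le> s e" and "m \<in> s ` H"
    using assms(3) unfolding m_def by auto
  have "truss_ok \<tau> (m + 2) H"
    unfolding truss_ok_def using m_le exact by force
  then have "H \<subseteq> truss \<tau> (m + 2) G"
    by (rule subset_truss[OF assms(1) HG])
  moreover have "truss \<tau> (Suc (m + 2)) G \<subseteq> H"
    using \<open>m \<in> s ` H\<close> k0 truss_antimono[OF assms(1), of "Suc k0" "Suc (m + 2)" \<tau>] T by force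
  ultimately show ?thesis
    using assms(2) unfolding m_def[symmetric] by auto
qed

lemma proc_inv_inner_done:
  assumes "proc_inv \<tau> G (H, s, log, k, True)" and "\<forall>e\<in>H. k - 2 < s e"
  shows "proc_inv \<tau> G (H, s, log, k, False)"
  using assms by auto

lemma proc_inv_pick:
  assumes G: "finite_graph G" and inv: "proc_inv \<tau> G (H, s, log, k, True)"
    and e: "e \<in> H" and se: "s e \<le> k - 2"
  defines "s' \<equiv> \<lambda>e'. if e' \<in> H - {e} \<and> e' \<subseteq> e \<union> Delta \<tau> e H \<and> s e' > k - 2
                       then supp \<tau> e' (H - {e}) else s e'"
  shows "proc_inv \<tau> G (H - {e}, s', log @ [(e, k)], k, True)"
proof -
  have HG: "H \<subseteq> G" and T: "truss \<tau> (Suc k) G \<subseteq> H" and k: "2 \<le> k" "H \<subseteq> truss \<tau> k G"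
    and upper: "\<forall>e'\<in>H. supp \<tau> e' H \<le> s e'"
    and exact: "\<forall>e'\<in>H. k - 2 < s e' \<longrightarrow> s e' = supp \<tau> e' H"
    using inv by auto
  have supp_remove: "supp \<tau> e' (H - {e}) \<le> supp \<tau> e' H" if "e' \<in> H" for e'
    using that HG by (intro supp_mono finite_graph_finite_Union[OF G]
        finite_graph_edge_nonempty[OF G]) auto
  have "e \<notin> truss \<tau> (Suc k) G"
    using upper e se k(1) by (intro not_in_truss_if_supp_less[OF G HG T]) fastforce
  then have "truss_number \<tau> e G = k" and "truss \<tau> (Suc k) G \<subseteq> H - {e}"
    using truss_number_eqI[OF G] e k(2) T by auto
  moreover have "\<forall>e'\<in>H - {e}. supp \<tau> e' (H - {e}) \<le> s' e'"
    using upper supp_remove unfolding s'_def by (auto intro: order.trans)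
  moreover have "s' e' = supp \<tau> e' (H - {e})" if "e' \<in> H - {e}" and "k - 2 < s' e'" for e'
  proof (cases "e' \<subseteq> e \<union> Delta \<tau> e H")
    case False
    then have "supp \<tau> e' (H - {e}) = supp \<tau> e' H"
      using that(1) e HG G unfolding supp_def finite_graph_def by (subst Delta_remove_edge) auto
    then show ?thesis using that exact False unfolding s'_def by auto
  qed (use that in \<open>auto simp: s'_def\<close>)
  ultimately show ?thesis
    using inv e k by auto
qed

lemma proc_inv_step:
  assumes "finite_graph G" and "proc_step \<tau> st st'"
  shows "proc_inv \<tau> G st \<Longrightarrow> proc_inv \<tau> G st'"
  using assms(2)
proof (induction rule: proc_step.induct)
  case outer
  then show ?case by (blast intro: proc_inv_outer[OF assms(1)])
next
  case pick
  then show ?case by (blast intro: proc_inv_pick[OF assms(1)])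
next
  case inner_done
  then show ?case by (blast intro: proc_inv_inner_done)
qed

lemma proc_inv_reachable:
  assumes "finite_graph G" and "(proc_step \<tau>)\<^sup>*\<^sup>* (init_state \<tau> G) st"
  shows "proc_inv \<tau> G st"
  using assms(2)
  by (induction rule: rtranclp_induct)
    (auto intro: proc_inv_init[OF assms(1)] proc_inv_step[OF assms(1)])

theorem theorem1:
  fixes G :: "'a set set" and \<tau> :: nat
  assumes "finite G" and "\<forall>e\<in>G. card e = 2" and "\<tau> \<ge> 1"
    and "(proc_step \<tau>)\<^sup>*\<^sup>* (init_state \<tau> G) (H, s, log, k, inner)"
    and "final_state (H, s, log, k, inner)"
  shows "distinct (map fst log) \<and> set (map fst log) = G \<and>
         (\<forall>(e, j)\<in>set log. j = truss_number \<tau> e G)"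
proof -
  have "finite_graph G"
    using assms(1,2) unfolding finite_graph_def by blast
  then have "proc_inv \<tau> G (H, s, log, k, inner)"
    using assms(4) by (rule proc_inv_reachable)
  moreover have "H = {}"
    using assms(5) unfolding final_state_def by simp
  ultimately show ?thesis by simp
qed

end
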